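(* Let $(T_\infty,\ell)$ have law $\mu$. Then, as $m\to\infty$, $$\mathbb P(\Delta'_0\ge m)\sim\frac{2}{m},$$ meaning that the ratio of the two sides tends to 1.
   Context: **The law $\mu$.** $\rho_l$ is the law of a Galton–Watson plane tree with offspring law $P(k)=2^{-k-1}$, root label $l$, and each non-root vertex labeled by its parent's label plus an independent uniform element of $\{-1,0,1\}$. $\mu$ is the law of $(T_\infty,\ell)$, which has a spine $\varnothing=S(0),S(1),\dots$ whose labels $X_n=\ell(S(n))$ form a random walk from 0 with i.i.d. uniform steps in $\{-1,0,1\}$. Conditionally on $(X_n)$, independent trees $L_n$ (to the left of $S(n)$) and $R_n$ (to the right), each with law $\rho_{X_n}$, are grafted. **The variables $\Delta'_i$.** For $i\ge0$ let $\sigma_i=\inf\{n\ge0:X_n=-i\}$. Let $L'_i$ be the forest made of the trees $L_{\sigma_i+j}$, $0\le j<\sigma_{i+1}-\sigma_i$. Define $\Delta'_i=\max_{v\in L'_i}(-\ell(v))-i$. *)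

theory Defs
  imports "HOL-Probability.Probability"
begin

text \<open>
Explicit construction of the law mu on a product probability space.
Randomness: every index carries an independent pair
(offspring number with law P(k) = 2^(-k-1), label increment uniform on {-1,0,1}).
  Spine i        : the (i+1)-th spine step X_(i+1) - X_i is the increment coordinate.
  Vert n s u     : vertex u (Ulam-Harris word) of the tree grafted at S(n),
                   on the left (s = True, tree L_n) or right (s = False, tree R_n).
Conditionally on the spine, the trees L_n, R_n are independent Galton-Watson
trees with geometric(1/2) offspring, root label X_n, and each non-root vertex
labelled by its parent's label plus an independent uniform step, i.e. law rho_(X_n).
\<close>

datatype idx = Spine nat | Vert nat bool "nat list"

definition coord :: "(nat \<times> int) measure" where
  "coord = measure_pmf (pair_pmf (geometric_pmf (1/2)) (pmf_of_set {-1, 0, 1}))"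

definition Omega :: "(idx \<Rightarrow> nat \<times> int) measure" where
  "Omega = PiM UNIV (\<lambda>_. coord)"

definition X :: "(idx \<Rightarrow> nat \<times> int) \<Rightarrow> nat \<Rightarrow> int" where
  "X \<omega> n = (\<Sum>i<n. snd (\<omega> (Spine i)))"

definition gtree :: "(idx \<Rightarrow> nat \<times> int) \<Rightarrow> nat \<Rightarrow> bool \<Rightarrow> nat list set" where
  "gtree \<omega> n s = {u. \<forall>j < length u. u ! j < fst (\<omega> (Vert n s (take j u)))}"

definition glabel :: "(idx \<Rightarrow> nat \<times> int) \<Rightarrow> nat \<Rightarrow> bool \<Rightarrow> nat list \<Rightarrow> int" where
  "glabel \<omega> n s u = X \<omega> n + (\<Sum>j\<in>{1..length u}. snd (\<omega> (Vert n s (take j u))))"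

definition sigma :: "(idx \<Rightarrow> nat \<times> int) \<Rightarrow> nat \<Rightarrow> enat" where
  "sigma \<omega> i = (if \<exists>n. X \<omega> n = - int i then enat (LEAST n. X \<omega> n = - int i) else \<infinity>)"

definition Lforest :: "(idx \<Rightarrow> nat \<times> int) \<Rightarrow> nat \<Rightarrow> (nat \<times> nat list) set" where
  "Lforest \<omega> i = {(n, u). sigma \<omega> i \<le> enat n \<and> enat n < sigma \<omega> (Suc i) \<and> u \<in> gtree \<omega> n True}"

definition Delta' :: "(idx \<Rightarrow> nat \<times> int) \<Rightarrow> nat \<Rightarrow> ereal" where
  "Delta' \<omega> i = (SUP v \<in> Lforest \<omega> i. ereal (real_of_int (- glabel \<omega> (fst v) True (snd v)))) - ereal (real i)"

end

theory Submission
  imports Defs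
begin

text \<open>
  Let \<open>A\<^sub>m\<close> be the event that every label in the forest \<open>L'\<^sub>0\<close> exceeds \<open>-m\<close>. The trees grafted
  on the spine are independent of the walk, so conditioning on the first spine step shows that
  \<open>P(A\<^sub>m) = f(0)\<close>, where \<open>f(-1) = 1\<close> and \<open>f(x) = w(x+m) (f(x-1) + f(x) + f(x+1)) / 3\<close> for
  \<open>x \<ge> 0\<close>; here \<open>w(k) = k(k+3)/((k+1)(k+2))\<close> is the probability that a tree of law \<open>\<rho>\<^sub>0\<close> has all
  labels \<open>> -k\<close> (Chassaing--Durhuus), itself characterised by the fixed-point equation
  \<open>w = 1/(2 - average of w)\<close> coming from the geometric offspring law. The recursion for \<open>f\<close> is solved
  by \<open>f(x) = m(m+1)/((x+m+1)(x+m+2))\<close>, hence \<open>P(\<Delta>'\<^sub>0 \<ge> m) = 1 - f(0) = 2/(m+2)\<close>.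
  Both \<open>w\<close> and \<open>f\<close> arise as limits of finite-height, respectively finite-time, approximations, and
  the limits are identified through a quadratic Lyapunov function of the damped averaging operator.
\<close>

section \<open>The Chassaing--Durhuus weights\<close>

text \<open>
  \<open>labels_gt_prob k\<close> will turn out to be the probability that all labels of a tree of law \<open>\<rho>\<^sub>0\<close>
  exceed \<open>-k\<close>, and \<open>labels_ge_prob b\<close> the probability that they are all \<open>\<ge> b\<close>.
\<close>

definition labels_gt_prob :: "real \<Rightarrow> real" where
  "labels_gt_prob k = k * (k + 3) / ((k + 1) * (k + 2))"

lemma labels_gt_prob_0 [simp]: "labels_gt_prob 0 = 0"
  by (simp add: labels_gt_prob_def)

lemma labels_gt_prob_nonneg: "k \<ge> 0 \<Longrightarrow> labels_gt_prob k \<ge> 0"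
  unfolding labels_gt_prob_def by simp

lemma labels_gt_prob_le_1:
  assumes "k \<ge> 0" shows "labels_gt_prob k \<le> 1"
proof -
  have "k * (k + 3) \<le> (k + 1) * (k + 2)" by (simp add: algebra_simps)
  with assms show ?thesis unfolding labels_gt_prob_def by simp
qed

lemma one_minus_labels_gt_prob:
  assumes "k \<ge> 0" shows "1 - labels_gt_prob k = 2 / ((k + 1) * (k + 2))"
proof -
  have "(k + 1) * (k + 2) \<noteq> 0" using assms by simp
  then show ?thesis unfolding labels_gt_prob_def by (simp add: divide_simps) algebra
qed

lemma labels_gt_prob_fixpoint:
  assumes "k \<ge> 0"
  shows "labels_gt_prob (k + 1) * (2 - (labels_gt_prob k + labels_gt_prob (k + 1) + labels_gt_prob (k + 2)) / 3) = 1"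
proof -
  have "k + 1 \<noteq> 0" "k + 2 \<noteq> 0" "k + 3 \<noteq> 0" "k + 4 \<noteq> 0" using assms by auto
  moreover have "k + 1 + 1 = k + 2" "k + 1 + 2 = k + 3" "k + 2 + 1 = k + 3" "k + 2 + 2 = k + 4" "k + 1 + 3 = k + 4"
    by auto
  ultimately show ?thesis unfolding labels_gt_prob_def by (simp add: divide_simps) algebra
qed

definition labels_ge_prob :: "int \<Rightarrow> real" where
  "labels_ge_prob b = (if b \<le> 0 then labels_gt_prob (real_of_int (1 - b)) else 0)"

lemma labels_ge_prob_bounds: "0 \<le> labels_ge_prob b \<and> labels_ge_prob b \<le> 1"
  unfolding labels_ge_prob_def using labels_gt_prob_nonneg labels_gt_prob_le_1 by auto

lemma labels_ge_prob_fixpoint: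
  assumes "b \<le> 0"
  shows "labels_ge_prob b = 1 / (2 - (labels_ge_prob (b - 1) + labels_ge_prob b + labels_ge_prob (b + 1)) / 3)"
proof -
  define k where "k = real_of_int (- b)"
  have k: "k \<ge> 0" using assms by (simp add: k_def)
  have "labels_ge_prob b = labels_gt_prob (k + 1)" "labels_ge_prob (b - 1) = labels_gt_prob (k + 2)"
    using assms by (simp_all add: labels_ge_prob_def k_def)
  moreover have "labels_ge_prob (b + 1) = labels_gt_prob k"
    using assms by (cases "b = 0") (simp_all add: labels_ge_prob_def k_def)
  moreover note labels_gt_prob_fixpoint[OF k]
  moreover have "2 - (labels_gt_prob k + labels_gt_prob (k + 1) + labels_gt_prob (k + 2)) / 3 \<noteq> 0"
    using calculation by auto
  ultimately show ?thesis by (simp add: field_simps)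
qed

section \<open>A damped averaging operator\<close>

definition damped_avg :: "nat \<Rightarrow> (int \<Rightarrow> real) \<Rightarrow> int \<Rightarrow> real" where
  "damped_avg m \<phi> x =
     (if x < 0 then 0 else labels_gt_prob (real_of_int x + real m) * (\<phi> (x - 1) + \<phi> x + \<phi> (x + 1)) / 3)"

lemma damped_avg_mono: "(\<And>x. \<phi> x \<le> \<gamma> x) \<Longrightarrow> damped_avg m \<phi> x \<le> damped_avg m \<gamma> x"
  unfolding damped_avg_def
  by (auto intro!: divide_right_mono mult_left_mono add_mono labels_gt_prob_nonneg)

lemma damped_avg_nonneg: "(\<And>x. \<phi> x \<ge> 0) \<Longrightarrow> damped_avg m \<phi> x \<ge> 0"
  unfolding damped_avg_def
  by (auto intro!: divide_nonneg_pos mult_nonneg_nonneg add_nonneg_nonneg labels_gt_prob_nonneg)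

lemma damped_avg_scaled_diff:
  "damped_avg m (\<lambda>x. c * (\<phi> x - \<gamma> x)) x = c * (damped_avg m \<phi> x - damped_avg m \<gamma> x)"
  unfolding damped_avg_def by (simp add: algebra_simps add_divide_distrib diff_divide_distrib)

definition lyapunov :: "nat \<Rightarrow> int \<Rightarrow> real" where
  "lyapunov m x = (if x < 0 then 0 else (real_of_int x + 1) * (real_of_int x + 1 + (real m + 1)^2))"

lemma lyapunov_eq: "x \<ge> -1 \<Longrightarrow> lyapunov m x = (real_of_int x + 1) * (real_of_int x + 1 + (real m + 1)^2)"
  unfolding lyapunov_def by (cases "x = -1") auto

lemma lyapunov_nonneg: "lyapunov m x \<ge> 0"
  unfolding lyapunov_def by auto

lemma consecutive_product_le:
  fixes y m :: real
  assumes "y \<ge> 1" "m \<ge> 0"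
  shows "(y + m) * (y + m + 1) \<le> 2 * (y * (y + (m + 1)^2))"
proof -
  define c where "c = 2 * m\<^sup>2 + 2 * m + 1"
  have "c \<ge> 0" using assms by (simp add: c_def)
  then have "c \<le> c * y" using mult_left_mono[OF assms(1)] by simp
  moreover have "2 * (y * (y + (m + 1)^2)) - (y + m) * (y + m + 1) = y\<^sup>2 + c * y - m\<^sup>2 - m"
    by (simp add: c_def algebra_simps power2_eq_square)
  moreover have "y\<^sup>2 \<ge> 0" "m\<^sup>2 \<ge> 0" by simp_all
  ultimately show ?thesis using assms c_def by linarith
qed

lemma lyapunov_drift:
  assumes x: "x \<ge> 0"
  shows "1 \<le> 3 * (lyapunov m x - damped_avg m (lyapunov m) x)"
proof -
  define y where "y = real_of_int x + 1"
  define P where "P = y * (y + (real m + 1)^2)"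
  define k where "k = real_of_int x + real m"
  define Q where "Q = (k + 1) * (k + 2)"
  have k: "k \<ge> 0" and Q: "Q > 0" using x by (simp_all add: k_def Q_def)
  have "lyapunov m (x - 1) + lyapunov m x + lyapunov m (x + 1) = 3 * P + 2"
    using x by (simp add: lyapunov_eq y_def P_def algebra_simps power2_eq_square)
  then have "3 * (lyapunov m x - damped_avg m (lyapunov m) x) = 3 * P * (1 - labels_gt_prob k) - 2 * labels_gt_prob k"
    using x by (simp add: damped_avg_def lyapunov_eq P_def y_def k_def algebra_simps)
  also have "\<dots> = 6 * P / Q - 2 * labels_gt_prob k"
    using one_minus_labels_gt_prob[OF k] by (simp add: Q_def)
  finally have drift: "3 * (lyapunov m x - damped_avg m (lyapunov m) x) = 6 * P / Q - 2 * labels_gt_prob k" .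
  have "Q \<le> 2 * P"
    using consecutive_product_le[of y "real m"] x
    by (simp add: Q_def P_def k_def y_def algebra_simps)
  then have "6 * P / Q \<ge> 3" using Q by (simp add: field_simps)
  with drift labels_gt_prob_le_1[OF k] show ?thesis by linarith
qed

text \<open>
  A nonnegative subsolution of the damped recursion is dominated termwise by the telescoping
  differences of the iterates of \<^const>\<open>damped_avg\<close> applied to the Lyapunov function, hence summable.
\<close>

lemma damped_subsolution_tendsto_zero:
  fixes D :: "nat \<Rightarrow> int \<Rightarrow> real"
  assumes neg: "\<And>N x. x < 0 \<Longrightarrow> D N x = 0"
    and nonneg: "\<And>N x. 0 \<le> D N x"
    and init: "\<And>x. D 0 x \<le> 1"
    and step: "\<And>N x. x \<ge> 0 \<Longrightarrow>
                 D (Suc N) x \<le> labels_gt_prob (real_of_int x + real m) * (D N (x - 1) + D N x + D N (x + 1)) / 3"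
  shows "(\<lambda>N. D N x) \<longlonglongrightarrow> 0"
proof -
  define \<psi> where "\<psi> j = (damped_avg m ^^ j) (lyapunov m)" for j
  have \<psi>_Suc: "\<psi> (Suc j) = damped_avg m (\<psi> j)" for j by (simp add: \<psi>_def)
  have \<psi>_nonneg: "\<psi> j x \<ge> 0" for j x
    by (induction j arbitrary: x) (auto simp: \<psi>_def lyapunov_nonneg intro!: damped_avg_nonneg)
  have \<psi>_neg: "x < 0 \<Longrightarrow> \<psi> j x = 0" for j x
    by (cases j) (auto simp: \<psi>_def damped_avg_def lyapunov_def)
  have bound: "D j x \<le> 3 * (\<psi> j x - \<psi> (Suc j) x)" for j x
  proof (induction j arbitrary: x)
    case 0
    show ?case
      using neg[of x 0] \<psi>_neg[of x 0] \<psi>_neg[of x 1] init[of x] lyapunov_drift[of x m]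
      by (cases "x < 0") (simp_all add: \<psi>_def)
  next
    case (Suc j)
    show ?case
    proof (cases "x < 0")
      case True
      then show ?thesis using neg \<psi>_neg[of x "Suc j"] \<psi>_neg[of x "Suc (Suc j)"] by simp
    next
      case False
      have "D (Suc j) x \<le> damped_avg m (D j) x" using step[of x j] False by (simp add: damped_avg_def)
      also have "\<dots> \<le> damped_avg m (\<lambda>x. 3 * (\<psi> j x - \<psi> (Suc j) x)) x"
        by (rule damped_avg_mono) (rule Suc.IH)
      also have "\<dots> = 3 * (\<psi> (Suc j) x - \<psi> (Suc (Suc j)) x)"
        using damped_avg_scaled_diff[of m 3 "\<psi> j" "\<psi> (Suc j)" x] by (simp add: \<psi>_Suc)
      finally show ?thesis .
    qed
  qed
  have "(\<Sum>j<N. D j x) \<le> 3 * lyapunov m x" for N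
  proof -
    have "(\<Sum>j<N. D j x) \<le> (\<Sum>j<N. 3 * (\<psi> j x - \<psi> (Suc j) x))"
      by (rule sum_mono) (rule bound)
    also have "\<dots> = 3 * (\<psi> 0 x - \<psi> N x)"
      using sum_lessThan_telescope'[of "\<lambda>j. \<psi> j x" N] sum_distrib_left[of 3 "\<lambda>j. \<psi> j x - \<psi> (Suc j) x" "{..<N}"]
      by simp
    also have "\<dots> \<le> 3 * lyapunov m x" using \<psi>_nonneg[of N x] by (simp add: \<psi>_def)
    finally show ?thesis .
  qed
  then have "summable (\<lambda>j. D j x)"
    by (intro summableI_nonneg_bounded[where x = "3 * lyapunov m x"] nonneg)
  then show ?thesis by (rule summable_LIMSEQ_zero)
qed

section \<open>Trees of bounded height\<close>

text \<open>\<open>labels_ge_prob_height h b\<close> is the analogue of \<^const>\<open>labels_ge_prob\<close> for the tree cut at height \<open>h\<close>.\<close>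

fun labels_ge_prob_height :: "nat \<Rightarrow> int \<Rightarrow> real" where
  "labels_ge_prob_height 0 b = (if b \<le> 0 then 1 else 0)"
| "labels_ge_prob_height (Suc h) b =
     (if b \<le> 0
      then 1 / (2 - (labels_ge_prob_height h (b - 1) + labels_ge_prob_height h b + labels_ge_prob_height h (b + 1)) / 3)
      else 0)"

lemma labels_ge_prob_height_pos: "b > 0 \<Longrightarrow> labels_ge_prob_height h b = 0"
  by (cases h) auto

lemma labels_ge_prob_height_bounds: "0 \<le> labels_ge_prob_height h b \<and> labels_ge_prob_height h b \<le> 1"
proof (induction h arbitrary: b)
  case (Suc h)
  define t where "t = (labels_ge_prob_height h (b - 1) + labels_ge_prob_height h b + labels_ge_prob_height h (b + 1)) / 3"
  have "0 \<le> t" "t \<le> 1" using Suc[of "b - 1"] Suc[of b] Suc[of "b + 1"] by (auto simp: t_def)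
  then have "0 \<le> 1 / (2 - t)" "1 / (2 - t) \<le> 1" by (auto simp: field_simps)
  then show ?case by (simp add: t_def[symmetric])
qed simp

lemma labels_ge_prob_le_height: "labels_ge_prob b \<le> labels_ge_prob_height h b"
proof (induction h arbitrary: b)
  case 0
  show ?case by (simp add: labels_ge_prob_def labels_gt_prob_le_1)
next
  case (Suc h)
  show ?case
  proof (cases "b \<le> 0")
    case True
    define \<alpha> where "\<alpha> = (labels_ge_prob_height h (b - 1) + labels_ge_prob_height h b + labels_ge_prob_height h (b + 1)) / 3"
    define \<beta> where "\<beta> = (labels_ge_prob (b - 1) + labels_ge_prob b + labels_ge_prob (b + 1)) / 3"
    have "\<beta> \<le> \<alpha>" using Suc[of "b - 1"] Suc[of b] Suc[of "b + 1"] by (simp add: \<alpha>_def \<beta>_def)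
    moreover have "\<alpha> \<le> 1"
      using labels_ge_prob_height_bounds[of h "b - 1"] labels_ge_prob_height_bounds[of h b]
        labels_ge_prob_height_bounds[of h "b + 1"]
      by (simp add: \<alpha>_def)
    ultimately have "1 / (2 - \<beta>) \<le> 1 / (2 - \<alpha>)" by (simp add: frac_le)
    then show ?thesis using True labels_ge_prob_fixpoint[OF True] by (simp add: \<alpha>_def \<beta>_def)
  qed (simp add: labels_ge_prob_def)
qed

lemma labels_ge_prob_height_excess_step:
  assumes b: "b \<le> 0"
  shows "labels_ge_prob_height (Suc h) b - labels_ge_prob b \<le> labels_ge_prob b *
           ((labels_ge_prob_height h (b + 1) - labels_ge_prob (b + 1)) + (labels_ge_prob_height h b - labels_ge_prob b)
            + (labels_ge_prob_height h (b - 1) - labels_ge_prob (b - 1))) / 3"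
proof -
  define \<alpha> where "\<alpha> = (labels_ge_prob_height h (b - 1) + labels_ge_prob_height h b + labels_ge_prob_height h (b + 1)) / 3"
  define \<beta> where "\<beta> = (labels_ge_prob (b - 1) + labels_ge_prob b + labels_ge_prob (b + 1)) / 3"
  have \<beta>\<alpha>: "\<beta> \<le> \<alpha>"
    using labels_ge_prob_le_height[of "b - 1" h] labels_ge_prob_le_height[of b h] labels_ge_prob_le_height[of "b + 1" h]
    by (simp add: \<alpha>_def \<beta>_def)
  have \<alpha>: "\<alpha> \<le> 1"
    using labels_ge_prob_height_bounds[of h "b - 1"] labels_ge_prob_height_bounds[of h b]
      labels_ge_prob_height_bounds[of h "b + 1"]
    by (simp add: \<alpha>_def)
  have fixpt: "labels_ge_prob b = 1 / (2 - \<beta>)" using labels_ge_prob_fixpoint[OF b] by (simp add: \<beta>_def)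
  have "labels_ge_prob_height (Suc h) b - labels_ge_prob b = 1 / (2 - \<alpha>) - 1 / (2 - \<beta>)"
    using b fixpt by (simp add: \<alpha>_def)
  also have "\<dots> = (\<alpha> - \<beta>) / ((2 - \<alpha>) * (2 - \<beta>))" using \<alpha> \<beta>\<alpha> by (simp add: field_simps)
  also have "\<dots> \<le> (\<alpha> - \<beta>) / (2 - \<beta>)"
  proof -
    have "2 - \<beta> \<le> (2 - \<alpha>) * (2 - \<beta>)" using \<alpha> \<beta>\<alpha> by (simp add: mult_le_cancel_right1)
    then show ?thesis using \<beta>\<alpha> \<alpha> by (intro divide_left_mono) auto
  qed
  also have "\<dots> = labels_ge_prob b * (\<alpha> - \<beta>)" using fixpt by simp
  also have "\<dots> = labels_ge_prob b *
           ((labels_ge_prob_height h (b + 1) - labels_ge_prob (b + 1)) + (labels_ge_prob_height h b - labels_ge_prob b)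
            + (labels_ge_prob_height h (b - 1) - labels_ge_prob (b - 1))) / 3"
    by (simp add: \<alpha>_def \<beta>_def field_simps)
  finally show ?thesis .
qed

lemma labels_ge_prob_height_tendsto: "(\<lambda>h. labels_ge_prob_height h b) \<longlonglongrightarrow> labels_ge_prob b"
proof (cases "b \<le> 0")
  case False
  then show ?thesis by (simp add: labels_ge_prob_height_pos labels_ge_prob_def)
next
  case True
  define D where "D h x = (if x < 0 then 0 else labels_ge_prob_height h (- x) - labels_ge_prob (- x))" for h x
  have "(\<lambda>h. D h (- b)) \<longlonglongrightarrow> 0"
  proof (rule damped_subsolution_tendsto_zero[where m = 1])
    show "D 0 x \<le> 1" for x using labels_ge_prob_bounds by (simp add: D_def)
    show "0 \<le> D h x" for h x using labels_ge_prob_le_height by (simp add: D_def)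
    fix h x assume x: "(x::int) \<ge> 0"
    have "D h (x - 1) = labels_ge_prob_height h (- x + 1) - labels_ge_prob (- x + 1)"
      using x by (cases "x = 0") (simp_all add: D_def labels_ge_prob_def labels_ge_prob_height_pos)
    moreover have "D h x = labels_ge_prob_height h (- x) - labels_ge_prob (- x)"
      and "D h (x + 1) = labels_ge_prob_height h (- x - 1) - labels_ge_prob (- x - 1)"
      using x by (simp_all add: D_def)
    moreover have "labels_ge_prob (- x) = labels_gt_prob (real_of_int x + real 1)"
      using x by (simp add: labels_ge_prob_def add.commute)
    moreover have "D (Suc h) x \<le> labels_ge_prob (- x) *
                     ((labels_ge_prob_height h (- x + 1) - labels_ge_prob (- x + 1))
                      + (labels_ge_prob_height h (- x) - labels_ge_prob (- x))
                      + (labels_ge_prob_height h (- x - 1) - labels_ge_prob (- x - 1))) / 3"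
      using labels_ge_prob_height_excess_step[of "- x" h] x by (simp add: D_def)
    ultimately show "D (Suc h) x \<le> labels_gt_prob (real_of_int x + real 1) * (D h (x - 1) + D h x + D h (x + 1)) / 3"
      by (simp only:)
  qed (simp add: D_def)
  then show ?thesis using True by (simp add: D_def LIM_zero_iff)
qed

section \<open>The spine recursion\<close>

text \<open>
  \<open>forest_above_prob m N x\<close> will be the probability that, for a spine walk started at \<open>x\<close>, the
  first \<open>N\<close> left trees grafted before the walk hits \<open>-1\<close> have all labels \<open>> -m\<close>.
\<close>

fun forest_above_prob :: "nat \<Rightarrow> nat \<Rightarrow> int \<Rightarrow> real" where
  "forest_above_prob m 0 x = 1"
| "forest_above_prob m (Suc N) x =
     (if x = -1 then 1
      else labels_ge_prob (1 - int m - x) * (forest_above_prob m N (x - 1) + forest_above_prob m N x + forest_above_prob m N (x + 1)) / 3)"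

definition forest_above_limit :: "nat \<Rightarrow> int \<Rightarrow> real" where
  "forest_above_limit m x = real m * (real m + 1) / ((real_of_int x + real m + 1) * (real_of_int x + real m + 2))"

lemma forest_above_prob_nonneg: "0 \<le> forest_above_prob m N x"
  by (induction N arbitrary: x)
     (auto intro!: divide_nonneg_pos mult_nonneg_nonneg add_nonneg_nonneg simp: labels_ge_prob_bounds)

lemma labels_ge_prob_spine:
  assumes "x \<ge> 0" shows "labels_ge_prob (1 - int m - x) = labels_gt_prob (real_of_int x + real m)"
proof (cases "x = 0 \<and> m = 0")
  case False
  with assms have "1 - int m - x \<le> 0" by auto
  then show ?thesis by (simp add: labels_ge_prob_def add.commute)
qed (simp add: labels_ge_prob_def)

lemma forest_above_limit_minus_1 [simp]: "m \<ge> 1 \<Longrightarrow> forest_above_limit m (-1) = 1"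
  by (simp add: forest_above_limit_def)

lemma forest_above_limit_0: "forest_above_limit m 0 = real m / (real m + 2)"
proof -
  have "real m + 1 \<noteq> 0" "real m + 2 \<noteq> 0" by (simp_all add: add_nonneg_pos)
  then show ?thesis by (simp add: forest_above_limit_def divide_simps add.commute)
qed

lemma forest_above_limit_bounds:
  assumes "x \<ge> -1" shows "0 \<le> forest_above_limit m x \<and> forest_above_limit m x \<le> 1"
proof -
  have x: "real_of_int x \<ge> -1" using assms by simp
  have "real m * (real m + 1) \<le> (real_of_int x + real m + 1) * (real_of_int x + real m + 2)"
    using x by (intro mult_mono) auto
  moreover have "(real_of_int x + real m + 1) * (real_of_int x + real m + 2) \<ge> 0"
    using x by simp
  ultimately show ?thesis unfolding forest_above_limit_def by (auto simp: divide_le_eq_1)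
qed

lemma forest_above_limit_harmonic:
  assumes "m \<ge> 1" "x \<ge> 0"
  shows "forest_above_limit m x = labels_gt_prob (real_of_int x + real m) *
           (forest_above_limit m (x - 1) + forest_above_limit m x + forest_above_limit m (x + 1)) / 3"
proof -
  define y where "y = real_of_int x + real m"
  have "y \<noteq> 0" "y + 1 \<noteq> 0" "y + 2 \<noteq> 0" "y + 3 \<noteq> 0" using assms by (simp_all add: y_def)
  then have key: "M / ((y + 1) * (y + 2)) =
                  y * (y + 3) / ((y + 1) * (y + 2)) * (M / (y * (y + 1)) + M / ((y + 1) * (y + 2)) + M / ((y + 2) * (y + 3))) / 3"
    for M by (simp add: divide_simps) algebra
  have shifts: "real_of_int (x - 1) + real m + 1 = y" "real_of_int (x - 1) + real m + 2 = y + 1"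
    "real_of_int (x + 1) + real m + 1 = y + 2" "real_of_int (x + 1) + real m + 2 = y + 3"
    by (simp_all add: y_def)
  show ?thesis
    unfolding forest_above_limit_def labels_gt_prob_def y_def[symmetric] shifts by (rule key)
qed

lemma forest_above_limit_le_prob:
  assumes m: "m \<ge> 1" and x: "x \<ge> -1"
  shows "forest_above_limit m x \<le> forest_above_prob m N x"
  using x
proof (induction N arbitrary: x)
  case 0
  then show ?case using forest_above_limit_bounds by simp
next
  case (Suc N)
  show ?case
  proof (cases "x = -1")
    case False
    then have x0: "x \<ge> 0" using Suc.prems by simp
    have "forest_above_limit m x = labels_gt_prob (real_of_int x + real m) *
            (forest_above_limit m (x - 1) + forest_above_limit m x + forest_above_limit m (x + 1)) / 3"
      by (rule forest_above_limit_harmonic[OF m x0])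
    also have "\<dots> \<le> labels_gt_prob (real_of_int x + real m) *
                    (forest_above_prob m N (x - 1) + forest_above_prob m N x + forest_above_prob m N (x + 1)) / 3"
      using Suc.IH[of "x - 1"] Suc.IH[of x] Suc.IH[of "x + 1"] x0
      by (intro divide_right_mono mult_left_mono add_mono labels_gt_prob_nonneg) auto
    finally show ?thesis using False x0 by (simp add: labels_ge_prob_spine)
  qed (use forest_above_limit_bounds in simp)
qed

lemma forest_above_prob_tendsto:
  assumes m: "m \<ge> 1"
  shows "(\<lambda>N. forest_above_prob m N 0) \<longlonglongrightarrow> real m / (real m + 2)"
proof -
  define D where "D N x = (if x < 0 then 0 else forest_above_prob m N x - forest_above_limit m x)" for N x
  have "(\<lambda>N. D N 0) \<longlonglongrightarrow> 0"
  proof (rule damped_subsolution_tendsto_zero)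
    show "0 \<le> D N x" for N x using forest_above_limit_le_prob[OF m] by (simp add: D_def)
    show "D 0 x \<le> 1" for x using forest_above_limit_bounds by (simp add: D_def)
    fix N x assume x: "(x::int) \<ge> 0"
    have minus: "forest_above_prob m N (x - 1) - forest_above_limit m (x - 1) = D N (x - 1)"
      using x m by (cases "x = 0"; cases N) (simp_all add: D_def)
    define w where "w = labels_gt_prob (real_of_int x + real m)"
    have "D (Suc N) x = w * (forest_above_prob m N (x - 1) + forest_above_prob m N x + forest_above_prob m N (x + 1)) / 3
                          - forest_above_limit m x"
      using x by (simp add: D_def labels_ge_prob_spine w_def)
    also have "\<dots> = w * (forest_above_prob m N (x - 1) + forest_above_prob m N x + forest_above_prob m N (x + 1)) / 3
                     - w * (forest_above_limit m (x - 1) + forest_above_limit m x + forest_above_limit m (x + 1)) / 3"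
      by (subst forest_above_limit_harmonic[OF m x]) (simp add: w_def)
    also have "\<dots> = w * ((forest_above_prob m N (x - 1) - forest_above_limit m (x - 1))
                         + (forest_above_prob m N x - forest_above_limit m x)
                         + (forest_above_prob m N (x + 1) - forest_above_limit m (x + 1))) / 3"
      by (simp add: field_simps)
    also have "\<dots> = w * (D N (x - 1) + D N x + D N (x + 1)) / 3"
      using minus x
      by (simp add: D_def)
    finally show "D (Suc N) x \<le> labels_gt_prob (real_of_int x + real m) * (D N (x - 1) + D N x + D N (x + 1)) / 3"
      by (simp add: w_def)
  qed (simp add: D_def)
  then show ?thesis by (simp add: D_def forest_above_limit_0 LIM_zero_iff)
qed

section \<open>The product space\<close>

lemma prob_space_coord: "prob_space coord"
  unfolding coord_def by (rule prob_space_measure_pmf)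

interpretation P: prob_space Omega
  unfolding Omega_def by (rule prob_space_PiM) (rule prob_space_coord)

lemma space_coord [simp]: "space coord = UNIV" and sets_coord [simp]: "sets coord = UNIV"
  by (simp_all add: coord_def)

lemma space_Omega [simp]: "space Omega = UNIV"
  unfolding Omega_def space_PiM by simp

lemma emeasure_Omega_eq_measure: "emeasure Omega A = ennreal (measure Omega A)"
  by (rule P.emeasure_eq_measure)

lemma measure_Omega_UNIV [simp]: "measure Omega UNIV = 1"
  using P.prob_space by simp

lemma measurable_component_count_space: "(\<lambda>\<omega>. \<omega> i) \<in> Omega \<rightarrow>\<^sub>M count_space UNIV"
proof -
  have "(\<lambda>\<omega>. \<omega> i) \<in> Omega \<rightarrow>\<^sub>M coord"
    unfolding Omega_def by (rule measurable_component_singleton) simp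
  then show ?thesis using measurable_cong_sets[of Omega Omega coord "count_space UNIV"] by simp
qed

lemma measurable_map_components:
  "(\<lambda>\<omega>. map \<omega> ids) \<in> Omega \<rightarrow>\<^sub>M (count_space UNIV :: (nat \<times> int) list measure)"
proof (induction ids)
  case (Cons i ids)
  have "(count_space UNIV \<Otimes>\<^sub>M count_space UNIV :: ((nat \<times> int) \<times> (nat \<times> int) list) measure) =
        count_space (UNIV \<times> UNIV)"
    by (intro pair_measure_countable) auto
  with measurable_Pair[OF measurable_component_count_space Cons.IH, of i]
  have "(\<lambda>\<omega>. (\<omega> i, map \<omega> ids)) \<in> Omega \<rightarrow>\<^sub>M count_space UNIV"
    by (simp only: UNIV_Times_UNIV)
  from measurable_compose[OF this measurable_count_space[of "\<lambda>(a, l). a # l"]]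
  show ?case by (simp add: case_prod_beta)
qed simp

lemma measurable_finite_dependence:
  fixes J :: "idx set" and P :: "(idx \<Rightarrow> nat \<times> int) \<Rightarrow> bool"
  assumes "finite J" and dep: "\<And>\<omega> \<omega>'. (\<forall>i\<in>J. \<omega> i = \<omega>' i) \<Longrightarrow> P \<omega> = P \<omega>'"
  shows "P \<in> Omega \<rightarrow>\<^sub>M count_space UNIV"
proof -
  obtain ids where ids: "set ids = J" using \<open>finite J\<close> finite_list by blast
  define R :: "(nat \<times> int) list \<Rightarrow> idx \<Rightarrow> nat \<times> int"
    where "R l = (\<lambda>i. case map_of (zip ids l) i of Some y \<Rightarrow> y | None \<Rightarrow> undefined)" for l
  have "P \<omega> = P (R (map \<omega> ids))" for \<omega>
  proof (rule dep, intro ballI)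
    fix i assume "i \<in> J"
    then have "map_of (zip ids (map \<omega> ids)) i = Some (\<omega> i)" by (simp add: map_of_zip_map ids)
    then show "\<omega> i = R (map \<omega> ids) i" by (simp add: R_def)
  qed
  then have "P = (\<lambda>\<omega>. P (R (map \<omega> ids)))" by auto
  also have "\<dots> \<in> Omega \<rightarrow>\<^sub>M count_space UNIV"
    by (rule measurable_compose[OF measurable_map_components measurable_count_space])
  finally show ?thesis .
qed

lemma sets_Collect_all_finite_dependence:
  fixes Q :: "(idx \<Rightarrow> nat \<times> int) \<Rightarrow> 'b::countable \<Rightarrow> bool"
  assumes "\<And>v. finite (J v)" and "\<And>v \<omega> \<omega>'. (\<forall>i\<in>J v. \<omega> i = \<omega>' i) \<Longrightarrow> Q \<omega> v = Q \<omega>' v"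
  shows "{\<omega>. \<forall>v. Q \<omega> v} \<in> sets Omega"
proof -
  have "{\<omega> \<in> space Omega. \<forall>v. Q \<omega> v} \<in> sets Omega"
  proof (rule sets.sets_Collect_countable_All)
    fix v
    have "(\<lambda>\<omega>. Q \<omega> v) \<in> Omega \<rightarrow>\<^sub>M count_space UNIV"
      by (rule measurable_finite_dependence[OF assms(1)]) (rule assms(2))
    from measurable_sets[OF this, of "{True}"]
    show "{\<omega> \<in> space Omega. Q \<omega> v} \<in> sets Omega" by (simp add: vimage_def)
  qed
  then show ?thesis by simp
qed

lemma emeasure_Omega_condition_component:
  assumes E: "E \<in> sets Omega"
  shows "emeasure Omega E = (\<integral>\<^sup>+ y. emeasure Omega {\<omega>. fun_upd \<omega> i y \<in> E} \<partial>coord)"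
proof -
  let ?upd = "\<lambda>p. (snd p)(i := fst p)"
  have upd: "?upd \<in> coord \<Otimes>\<^sub>M Omega \<rightarrow>\<^sub>M Omega"
    unfolding Omega_def by (rule measurable_fun_upd[where J = UNIV]) auto
  have "distr (coord \<Otimes>\<^sub>M Omega) Omega ?upd = Omega"
    using distr_pair_PiM_eq_PiM[of UNIV "\<lambda>_. coord" i] prob_space_coord
    by (simp add: Omega_def case_prod_beta')
  then have "emeasure Omega E = emeasure (coord \<Otimes>\<^sub>M Omega) (?upd -` E \<inter> space (coord \<Otimes>\<^sub>M Omega))"
    using emeasure_distr[OF upd E] by simp
  also have "\<dots> = (\<integral>\<^sup>+ y. emeasure Omega (Pair y -` (?upd -` E \<inter> space (coord \<Otimes>\<^sub>M Omega))) \<partial>coord)"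
    by (rule P.emeasure_pair_measure_alt) (rule measurable_sets[OF upd E])
  also have "\<dots> = (\<integral>\<^sup>+ y. emeasure Omega {\<omega>. fun_upd \<omega> i y \<in> E} \<partial>coord)"
    by (simp add: space_pair_measure vimage_def)
  finally show ?thesis .
qed

lemma nn_integral_coord:
  "(\<integral>\<^sup>+ y. f y \<partial>coord) = (\<integral>\<^sup>+ c. (\<Sum>d\<in>{-1, 0, 1}. f (c, d)) / 3 \<partial>geometric_pmf (1/2))"
  unfolding coord_def by (simp add: nn_integral_pair_pmf' nn_integral_pmf_of_set)

lemma nn_integral_coord_fst: "(\<integral>\<^sup>+ y. f (fst y) \<partial>coord) = (\<integral>\<^sup>+ c. f c \<partial>geometric_pmf (1/2))"
proof -
  have "(\<Sum>d\<in>{-1, 0, 1::int}. a) / 3 = a" for a :: ennreal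
  proof -
    have "(\<Sum>d\<in>{-1, 0, 1::int}. a) = a * 3" by (simp add: mult.commute)
    then show ?thesis by (simp add: ennreal_mult_divide_eq)
  qed
  then show ?thesis by (simp add: nn_integral_coord)
qed

lemma sum_three_ennreal_avg:
  assumes "\<And>d. 0 \<le> f d"
  shows "(\<Sum>d\<in>{-1, 0, 1::int}. ennreal (f d)) / 3 = ennreal ((f (-1) + f 0 + f 1) / 3)"
proof -
  have "(\<Sum>d\<in>{-1, 0, 1::int}. ennreal (f d)) = ennreal (\<Sum>d\<in>{-1, 0, 1}. f d)"
    using assms by (intro sum_ennreal)
  also have "(\<Sum>d\<in>{-1, 0, 1::int}. f d) = f (-1) + f 0 + f 1" by simp
  finally have sum: "(\<Sum>d\<in>{-1, 0, 1::int}. ennreal (f d)) = ennreal (f (-1) + f 0 + f 1)" .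
  show ?thesis
    unfolding sum by (rule ennreal_divide_numeral) (simp add: assms add_nonneg_nonneg)
qed

lemma nn_integral_geometric_power:
  assumes r: "0 \<le> r" "r \<le> 1"
  shows "(\<integral>\<^sup>+ c. ennreal (r ^ c) \<partial>geometric_pmf (1/2)) = ennreal (1 / (2 - r))"
proof -
  have "pmf (geometric_pmf (1/2)) c * r ^ c = 1/2 * (r/2) ^ c" for c
    by (subst pmf_geometric) (auto simp: power_divide field_simps)
  then have "(\<integral>\<^sup>+ c. ennreal (r ^ c) \<partial>geometric_pmf (1/2)) = (\<Sum>c. ennreal (1/2 * (r/2) ^ c))"
    using r by (simp add: nn_integral_measure_pmf nn_integral_count_space_nat ennreal_mult[symmetric])
  also have "\<dots> = ennreal (1/2 * (1 / (1 - r/2)))"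
  proof (rule suminf_ennreal_eq)
    show "(\<lambda>c. 1/2 * (r/2) ^ c) sums (1/2 * (1 / (1 - r/2)))"
      using r by (intro sums_mult geometric_sums) simp
  qed (use r in simp)
  also have "1/2 * (1 / (1 - r/2)) = 1 / (2 - r)" using r by (simp add: field_simps)
  finally show ?thesis .
qed

section \<open>Independence of events depending on disjoint coordinates\<close>

definition depends_on :: "(idx \<Rightarrow> nat \<times> int) set \<Rightarrow> idx set \<Rightarrow> bool" where
  "depends_on E A \<longleftrightarrow> (\<forall>\<omega> \<omega>'. (\<forall>i\<in>A. \<omega> i = \<omega>' i) \<longrightarrow> (\<omega> \<in> E \<longleftrightarrow> \<omega>' \<in> E))"

lemma depends_on_fun_upd: "depends_on E A \<Longrightarrow> i \<notin> A \<Longrightarrow> fun_upd \<omega> i y \<in> E \<longleftrightarrow> \<omega> \<in> E"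
  unfolding depends_on_def by (metis fun_upd_other)

lemma depends_on_mono: "depends_on E A \<Longrightarrow> A \<subseteq> B \<Longrightarrow> depends_on E B"
  unfolding depends_on_def by blast

lemma depends_on_INT: "(\<And>k. k \<in> K \<Longrightarrow> depends_on (E k) A) \<Longrightarrow> depends_on (\<Inter>k\<in>K. E k) A"
  unfolding depends_on_def by blast

lemma indep_vars_components: "P.indep_vars (\<lambda>_. coord) (\<lambda>i \<omega>. \<omega> i) UNIV"
proof -
  have rv: "\<And>i. P.random_variable coord (\<lambda>\<omega>. \<omega> i)"
    unfolding Omega_def by (rule measurable_component_singleton) simp
  have "distr Omega coord (\<lambda>\<omega>. \<omega> i) = coord" for i
    unfolding Omega_def by (rule distr_PiM_component) (auto intro: prob_space_coord)
  then have "distr Omega (\<Pi>\<^sub>M i\<in>UNIV. coord) (\<lambda>\<omega>. \<lambda>i\<in>UNIV. \<omega> i) = (\<Pi>\<^sub>M i\<in>UNIV. distr Omega coord (\<lambda>\<omega>. \<omega> i))"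
    by (simp add: Omega_def[symmetric] distr_id2 restrict_UNIV)
  then show ?thesis by (subst P.indep_vars_iff_distr_eq_PiM[OF _ rv]) auto
qed

lemma depends_on_restrict_preimage:
  assumes E: "E \<in> sets Omega" and dep: "depends_on E A"
  shows "\<exists>E' \<in> sets (PiM A (\<lambda>_. coord)). E = (\<lambda>\<omega>. restrict \<omega> A) -` E'"
proof -
  define ext where "ext r = (\<lambda>i. if i \<in> A then r i else (0::nat, 0::int))" for r :: "idx \<Rightarrow> nat \<times> int"
  have "ext \<in> PiM A (\<lambda>_. coord) \<rightarrow>\<^sub>M Omega"
    unfolding Omega_def ext_def
  proof (rule measurable_PiM_single')
    show "(\<lambda>r. if i \<in> A then r i else (0, 0)) \<in> PiM A (\<lambda>_. coord) \<rightarrow>\<^sub>M coord" for i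
      by (cases "i \<in> A") (auto intro: measurable_component_singleton)
  qed simp
  then have "ext -` E \<inter> space (PiM A (\<lambda>_. coord)) \<in> sets (PiM A (\<lambda>_. coord))"
    using E by (rule measurable_sets)
  moreover have "ext (restrict \<omega> A) \<in> E \<longleftrightarrow> \<omega> \<in> E" for \<omega>
    using dep unfolding depends_on_def by (metis ext_def restrict_apply')
  then have "E = (\<lambda>\<omega>. restrict \<omega> A) -` (ext -` E \<inter> space (PiM A (\<lambda>_. coord)))"
    by (auto simp: space_PiM)
  ultimately show ?thesis by blast
qed

lemma measure_Int_depends_on_disjoint:
  assumes "E \<in> sets Omega" "F \<in> sets Omega" "depends_on E A" "depends_on F B" "A \<inter> B = {}"
  shows "measure Omega (E \<inter> F) = measure Omega E * measure Omega F"
proof -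
  obtain E' where E': "E' \<in> sets (PiM A (\<lambda>_. coord))" "E = (\<lambda>\<omega>. restrict \<omega> A) -` E'"
    using depends_on_restrict_preimage assms by blast
  obtain F' where F': "F' \<in> sets (PiM B (\<lambda>_. coord))" "F = (\<lambda>\<omega>. restrict \<omega> B) -` F'"
    using depends_on_restrict_preimage assms by blast
  have "P.indep_var (PiM A (\<lambda>_. coord)) (\<lambda>\<omega>. restrict \<omega> A) (PiM B (\<lambda>_. coord)) (\<lambda>\<omega>. restrict \<omega> B)"
    using P.indep_var_restrict[OF indep_vars_components \<open>A \<inter> B = {}\<close>] by simp
  from P.indep_varD[OF this E'(1) F'(1)] show ?thesis
    by (simp add: E'(2) F'(2) vimage_Int[symmetric] Times_Int_Times vimage_def Int_def)
qed

section \<open>Shifting along the spine\<close>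

fun spine_shift :: "idx \<Rightarrow> idx" where
  "spine_shift (Spine i) = Spine (Suc i)"
| "spine_shift (Vert n s u) = Vert (Suc n) s u"

definition theta :: "(idx \<Rightarrow> nat \<times> int) \<Rightarrow> idx \<Rightarrow> nat \<times> int" where
  "theta \<omega> = \<omega> \<circ> spine_shift"

lemma inj_spine_shift: "inj spine_shift"
proof (rule injI)
  show "spine_shift i = spine_shift j \<Longrightarrow> i = j" for i j by (cases i; cases j) auto
qed

lemma measurable_theta: "theta \<in> Omega \<rightarrow>\<^sub>M Omega"
  unfolding Omega_def theta_def comp_def
  by (rule measurable_PiM_single') (auto intro: measurable_component_singleton)

lemma sets_vimage_theta: "B \<in> sets Omega \<Longrightarrow> theta -` B \<in> sets Omega"
  using measurable_sets[OF measurable_theta] by fastforce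

lemma measure_vimage_theta:
  assumes "B \<in> sets Omega" shows "measure Omega (theta -` B) = measure Omega B"
proof -
  have "distr Omega Omega theta = Omega"
    using distr_PiM_reindex[of UNIV "\<lambda>_. coord" spine_shift UNIV] prob_space_coord inj_spine_shift
    by (simp add: Omega_def theta_def[abs_def] comp_def restrict_UNIV)
  then show ?thesis using measure_distr[OF measurable_theta assms] by simp
qed

lemma depends_on_vimage_theta: "depends_on (theta -` B) (range spine_shift)"
  unfolding depends_on_def
proof (intro allI impI)
  fix \<omega> \<omega>' :: "idx \<Rightarrow> nat \<times> int"
  assume "\<forall>i\<in>range spine_shift. \<omega> i = \<omega>' i"
  then have "theta \<omega> = theta \<omega>'" by (simp add: theta_def fun_eq_iff)
  then show "\<omega> \<in> theta -` B \<longleftrightarrow> \<omega>' \<in> theta -` B" by simp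
qed

lemma theta_fun_upd_Spine_0 [simp]: "theta (fun_upd \<omega> (Spine 0) y) = theta \<omega>"
proof -
  have "spine_shift i \<noteq> Spine 0" for i by (cases i) auto
  then show ?thesis by (simp add: theta_def fun_eq_iff)
qed

lemma X_0 [simp]: "X \<omega> 0 = 0"
  by (simp add: X_def)

lemma X_Suc: "X \<omega> (Suc j) = snd (\<omega> (Spine 0)) + X (theta \<omega>) j"
  unfolding X_def theta_def using sum.lessThan_Suc_shift[of "\<lambda>i. snd (\<omega> (Spine i))" j] by simp

section \<open>Labelled Galton--Watson trees\<close>

definition in_subtree :: "(idx \<Rightarrow> nat \<times> int) \<Rightarrow> nat \<Rightarrow> bool \<Rightarrow> nat list \<Rightarrow> nat list \<Rightarrow> bool" where
  "in_subtree \<omega> n s u v \<longleftrightarrow> (\<forall>j<length v. v ! j < fst (\<omega> (Vert n s (u @ take j v))))"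

definition rel_label :: "(idx \<Rightarrow> nat \<times> int) \<Rightarrow> nat \<Rightarrow> bool \<Rightarrow> nat list \<Rightarrow> nat list \<Rightarrow> int" where
  "rel_label \<omega> n s u v = (\<Sum>j\<in>{1..length v}. snd (\<omega> (Vert n s (u @ take j v))))"

definition path_coords :: "nat \<Rightarrow> bool \<Rightarrow> nat list \<Rightarrow> nat list \<Rightarrow> idx set" where
  "path_coords n s u v = (\<lambda>j. Vert n s (u @ take j v)) ` {..length v}"

definition subtree_coords :: "nat \<Rightarrow> bool \<Rightarrow> nat list \<Rightarrow> idx set" where
  "subtree_coords n s u = {Vert n s (u @ z) | z. True}"

lemma gtree_eq_in_subtree: "u \<in> gtree \<omega> n s \<longleftrightarrow> in_subtree \<omega> n s [] u"
  unfolding gtree_def in_subtree_def by simp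

lemma glabel_eq_rel_label: "glabel \<omega> n s u = X \<omega> n + rel_label \<omega> n s [] u"
  unfolding glabel_def rel_label_def by simp

lemma in_subtree_Nil [simp]: "in_subtree \<omega> n s u []"
  by (simp add: in_subtree_def)

lemma rel_label_Nil [simp]: "rel_label \<omega> n s u [] = 0"
  by (simp add: rel_label_def)

lemma in_subtree_Cons:
  "in_subtree \<omega> n s u (k # v) \<longleftrightarrow> k < fst (\<omega> (Vert n s u)) \<and> in_subtree \<omega> n s (u @ [k]) v"
  unfolding in_subtree_def by (simp add: All_less_Suc2)

lemma rel_label_Cons:
  "rel_label \<omega> n s u (k # v) = snd (\<omega> (Vert n s (u @ [k]))) + rel_label \<omega> n s (u @ [k]) v"
proof -
  have "rel_label \<omega> n s u (k # v) = (\<Sum>j\<in>{1..Suc (length v)}. snd (\<omega> (Vert n s (u @ take j (k # v)))))"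
    by (simp add: rel_label_def)
  also have "\<dots> = snd (\<omega> (Vert n s (u @ [k]))) + (\<Sum>j\<in>{Suc 1..Suc (length v)}. snd (\<omega> (Vert n s (u @ take j (k # v)))))"
    by (subst sum.atLeast_Suc_atMost) simp_all
  also have "(\<Sum>j\<in>{Suc 1..Suc (length v)}. snd (\<omega> (Vert n s (u @ take j (k # v))))) =
             (\<Sum>j\<in>{1..length v}. snd (\<omega> (Vert n s (u @ take (Suc j) (k # v)))))"
    by (rule sum.shift_bounds_cl_Suc_ivl)
  finally show ?thesis by (simp add: rel_label_def)
qed

lemma finite_path_coords [simp]: "finite (path_coords n s u v)"
  by (simp add: path_coords_def)

lemma Vert_in_path_coords [simp]: "Vert n s u \<in> path_coords n s u v"
  unfolding path_coords_def by (rule image_eqI[of _ _ 0]) auto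

lemma path_coords_subset: "path_coords n s u v \<subseteq> subtree_coords n s u"
  unfolding path_coords_def subtree_coords_def by auto

lemma in_subtree_cong: "\<forall>i\<in>path_coords n s u v. \<omega> i = \<omega>' i \<Longrightarrow> in_subtree \<omega> n s u v = in_subtree \<omega>' n s u v"
  unfolding in_subtree_def path_coords_def by auto

lemma rel_label_cong: "\<forall>i\<in>path_coords n s u v. \<omega> i = \<omega>' i \<Longrightarrow> rel_label \<omega> n s u v = rel_label \<omega>' n s u v"
  unfolding rel_label_def path_coords_def by (intro sum.cong) auto

lemma in_subtree_cong_fst: "(\<And>i. fst (\<omega> i) = fst (\<omega>' i)) \<Longrightarrow> in_subtree \<omega> n s u v = in_subtree \<omega>' n s u v"
  unfolding in_subtree_def by simp

lemma rel_label_fun_upd_root: "rel_label (fun_upd \<omega> (Vert n s u) y) n s u v = rel_label \<omega> n s u v"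
  unfolding rel_label_def by (intro sum.cong) auto

lemma Vert_in_subtree_coords [simp]: "Vert n s u \<in> subtree_coords n s u"
  unfolding subtree_coords_def by (auto intro: exI[of _ "[]"])

lemma Vert_notin_child_subtree_coords: "Vert n s u \<notin> subtree_coords n s (u @ [k])"
  unfolding subtree_coords_def by auto

lemma child_subtree_coords_disjoint:
  "k \<noteq> k' \<Longrightarrow> subtree_coords n s (u @ [k]) \<inter> subtree_coords n s (u @ [k']) = {}"
  unfolding subtree_coords_def by auto

text \<open>In the planted version the labels are taken relative to the parent of \<open>u\<close>.\<close>

definition subtree_above :: "nat \<Rightarrow> nat \<Rightarrow> bool \<Rightarrow> nat list \<Rightarrow> int \<Rightarrow> (idx \<Rightarrow> nat \<times> int) set" where
  "subtree_above h n s u a = {\<omega>. \<forall>v. length v \<le> h \<longrightarrow> in_subtree \<omega> n s u v \<longrightarrow> a \<le> rel_label \<omega> n s u v}"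

definition planted_subtree_above :: "nat \<Rightarrow> nat \<Rightarrow> bool \<Rightarrow> nat list \<Rightarrow> int \<Rightarrow> (idx \<Rightarrow> nat \<times> int) set" where
  "planted_subtree_above h n s u a =
     {\<omega>. \<forall>v. length v \<le> h \<longrightarrow> in_subtree \<omega> n s u v \<longrightarrow> a \<le> snd (\<omega> (Vert n s u)) + rel_label \<omega> n s u v}"

lemma depends_on_subtree_above: "depends_on (subtree_above h n s u a) (subtree_coords n s u)"
  unfolding depends_on_def
proof (intro allI impI)
  fix \<omega> \<omega>' :: "idx \<Rightarrow> nat \<times> int"
  assume "\<forall>i\<in>subtree_coords n s u. \<omega> i = \<omega>' i"
  then have agree: "\<forall>i\<in>path_coords n s u v. \<omega> i = \<omega>' i" for v using path_coords_subset by blast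
  show "\<omega> \<in> subtree_above h n s u a \<longleftrightarrow> \<omega>' \<in> subtree_above h n s u a"
    unfolding subtree_above_def by (simp add: in_subtree_cong[OF agree] rel_label_cong[OF agree])
qed

lemma depends_on_planted_subtree_above: "depends_on (planted_subtree_above h n s u a) (subtree_coords n s u)"
  unfolding depends_on_def
proof (intro allI impI)
  fix \<omega> \<omega>' :: "idx \<Rightarrow> nat \<times> int"
  assume root: "\<forall>i\<in>subtree_coords n s u. \<omega> i = \<omega>' i"
  then have agree: "\<forall>i\<in>path_coords n s u v. \<omega> i = \<omega>' i" for v using path_coords_subset by blast
  show "\<omega> \<in> planted_subtree_above h n s u a \<longleftrightarrow> \<omega>' \<in> planted_subtree_above h n s u a"
    unfolding planted_subtree_above_def using root
    by (simp add: in_subtree_cong[OF agree] rel_label_cong[OF agree])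
qed

lemma sets_subtree_above: "subtree_above h n s u a \<in> sets Omega"
  unfolding subtree_above_def
  by (rule sets_Collect_all_finite_dependence[where J = "path_coords n s u"])
     (auto dest: in_subtree_cong rel_label_cong)

lemma sets_planted_subtree_above: "planted_subtree_above h n s u a \<in> sets Omega"
  unfolding planted_subtree_above_def
  by (rule sets_Collect_all_finite_dependence[where J = "path_coords n s u"])
     (auto dest: in_subtree_cong rel_label_cong)

lemma subtree_above_0: "subtree_above 0 n s u a = (if a \<le> 0 then UNIV else {})"
  unfolding subtree_above_def by auto

lemma subtree_above_Suc:
  "subtree_above (Suc h) n s u a =
     {\<omega>. a \<le> 0 \<and> (\<forall>k < fst (\<omega> (Vert n s u)). \<omega> \<in> planted_subtree_above h n s (u @ [k]) a)}"
proof -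
  have all_list: "(\<forall>v. Q v) \<longleftrightarrow> Q [] \<and> (\<forall>k v. Q (k # v))" for Q :: "nat list \<Rightarrow> bool"
    by (metis list.exhaust)
  show ?thesis
    unfolding subtree_above_def planted_subtree_above_def
    by (subst all_list) (auto simp: in_subtree_Cons rel_label_Cons)
qed

lemma in_subtree_fun_upd_snd:
  "in_subtree (fun_upd \<omega> i y) n s u v = in_subtree (fun_upd \<omega> i (fst y, d)) n s u v"
  by (rule in_subtree_cong_fst) simp

lemma subtree_above_fun_upd_root:
  "{\<omega>. fun_upd \<omega> (Vert n s u) y \<in> subtree_above h n s u b} = {\<omega>. fun_upd \<omega> (Vert n s u) (fst y, 0) \<in> subtree_above h n s u b}"
  unfolding subtree_above_def
  by (simp add: rel_label_fun_upd_root in_subtree_fun_upd_snd[of _ _ y _ _ _ _ 0])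

lemma planted_subtree_above_fun_upd_root:
  "{\<omega>. fun_upd \<omega> (Vert n s u) y \<in> planted_subtree_above h n s u a} =
   {\<omega>. fun_upd \<omega> (Vert n s u) (fst y, 0) \<in> subtree_above h n s u (a - snd y)}"
  unfolding subtree_above_def planted_subtree_above_def
  by (auto simp: rel_label_fun_upd_root in_subtree_fun_upd_snd[of _ _ y _ _ _ _ 0] algebra_simps)

lemma measure_INT_children:
  assumes "\<And>k. E k \<in> sets Omega" and "\<And>k. depends_on (E k) (subtree_coords n s (u @ [k]))"
  shows "measure Omega (\<Inter>k<c. E k) = (\<Prod>k<c. measure Omega (E k))"
proof (induction c)
  case (Suc c)
  have "depends_on (\<Inter>k<c. E k) (\<Union>k<c. subtree_coords n s (u @ [k]))"
    by (intro depends_on_INT depends_on_mono[OF assms(2)]) auto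
  moreover have "subtree_coords n s (u @ [k]) \<inter> subtree_coords n s (u @ [c]) = {}" if "k < c" for k
    using that by (intro child_subtree_coords_disjoint) simp
  then have "(\<Union>k<c. subtree_coords n s (u @ [k])) \<inter> subtree_coords n s (u @ [c]) = {}"
    by blast
  moreover have "(\<Inter>k<c. E k) \<in> sets Omega"
    using sets.top[of Omega] assms(1) by (intro sets.countable_INT'') auto
  ultimately have "measure Omega ((\<Inter>k<c. E k) \<inter> E c) = measure Omega (\<Inter>k<c. E k) * measure Omega (E c)"
    using measure_Int_depends_on_disjoint assms by blast
  moreover have "(\<Inter>k<Suc c. E k) = (\<Inter>k<c. E k) \<inter> E c"
    by (auto simp: lessThan_Suc)
  ultimately show ?case by (simp add: Suc.IH)
qed simp

text \<open>
  Conditionally on the increment of \<open>u\<close>, the planted subtree is the subtree shifted by it, so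
  its probability is the average of three shifted subtree probabilities.
\<close>

lemma measure_planted_subtree_above:
  assumes IH: "\<And>u b. measure Omega (subtree_above h n s u b) = labels_ge_prob_height h b"
  shows "measure Omega (planted_subtree_above h n s u a) =
           (labels_ge_prob_height h (a - 1) + labels_ge_prob_height h a + labels_ge_prob_height h (a + 1)) / 3"
proof -
  define g where "g c b = emeasure Omega {\<omega>. fun_upd \<omega> (Vert n s u) (c, 0) \<in> subtree_above h n s u b}" for c b
  have fibre_integral: "ennreal (labels_ge_prob_height h b) = (\<integral>\<^sup>+ c. g c b \<partial>geometric_pmf (1/2))" for b
  proof -
    have "ennreal (labels_ge_prob_height h b) =
            (\<integral>\<^sup>+ y. emeasure Omega {\<omega>. fun_upd \<omega> (Vert n s u) y \<in> subtree_above h n s u b} \<partial>coord)"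
      using IH[of u b] emeasure_Omega_condition_component[OF sets_subtree_above]
      by (simp add: emeasure_Omega_eq_measure)
    also have "\<dots> = (\<integral>\<^sup>+ y. g (fst y) b \<partial>coord)"
      by (intro nn_integral_cong) (subst subtree_above_fun_upd_root, simp add: g_def)
    also have "\<dots> = (\<integral>\<^sup>+ c. g c b \<partial>geometric_pmf (1/2))"
      by (rule nn_integral_coord_fst)
    finally show ?thesis .
  qed
  have "emeasure Omega (planted_subtree_above h n s u a) =
          (\<integral>\<^sup>+ y. emeasure Omega {\<omega>. fun_upd \<omega> (Vert n s u) y \<in> planted_subtree_above h n s u a} \<partial>coord)"
    by (rule emeasure_Omega_condition_component[OF sets_planted_subtree_above])
  also have "\<dots> = (\<integral>\<^sup>+ y. g (fst y) (a - snd y) \<partial>coord)"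
    by (simp only: planted_subtree_above_fun_upd_root g_def)
  also have "\<dots> = (\<integral>\<^sup>+ c. (\<Sum>d\<in>{-1, 0, 1}. g c (a - d)) / 3 \<partial>geometric_pmf (1/2))"
    by (simp add: nn_integral_coord)
  also have "\<dots> = (\<integral>\<^sup>+ c. (\<Sum>d\<in>{-1, 0, 1}. g c (a - d)) \<partial>geometric_pmf (1/2)) / 3"
    by (rule nn_integral_divide) simp
  also have "\<dots> = (\<Sum>d\<in>{-1, 0, 1}. (\<integral>\<^sup>+ c. g c (a - d) \<partial>geometric_pmf (1/2))) / 3"
    by (subst nn_integral_sum) auto
  also have "\<dots> = (\<Sum>d\<in>{-1, 0, 1}. ennreal (labels_ge_prob_height h (a - d))) / 3"
    by (simp only: fibre_integral)
  also have "\<dots> = ennreal ((labels_ge_prob_height h (a + 1) + labels_ge_prob_height h a + labels_ge_prob_height h (a - 1)) / 3)"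
    using labels_ge_prob_height_bounds by (subst sum_three_ennreal_avg) simp_all
  finally show ?thesis
    using labels_ge_prob_height_bounds by (simp add: emeasure_Omega_eq_measure add_nonneg_nonneg add_ac)
qed

lemma measure_subtree_above: "measure Omega (subtree_above h n s u a) = labels_ge_prob_height h a"
proof (induction h arbitrary: u a)
  case 0
  then show ?case by (simp add: subtree_above_0)
next
  case (Suc h)
  define p where "p = (labels_ge_prob_height h (a - 1) + labels_ge_prob_height h a + labels_ge_prob_height h (a + 1)) / 3"
  have p: "0 \<le> p" "p \<le> 1"
    using labels_ge_prob_height_bounds[of h "a - 1"] labels_ge_prob_height_bounds[of h a]
      labels_ge_prob_height_bounds[of h "a + 1"]
    by (auto simp: p_def)
  have children: "{\<omega>. fun_upd \<omega> (Vert n s u) y \<in> subtree_above (Suc h) n s u a} =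
                  (if a \<le> 0 then (\<Inter>k<fst y. planted_subtree_above h n s (u @ [k]) a) else {})" for y
    using depends_on_fun_upd[OF depends_on_planted_subtree_above Vert_notin_child_subtree_coords]
    by (auto simp: subtree_above_Suc)
  have "measure Omega (\<Inter>k<c. planted_subtree_above h n s (u @ [k]) a) = p ^ c" for c
  proof -
    have "measure Omega (\<Inter>k<c. planted_subtree_above h n s (u @ [k]) a) =
            (\<Prod>k<c. measure Omega (planted_subtree_above h n s (u @ [k]) a))"
      by (rule measure_INT_children[OF sets_planted_subtree_above depends_on_planted_subtree_above])
    also have "\<dots> = p ^ c"
      by (simp only: measure_planted_subtree_above[OF Suc.IH] p_def[symmetric] prod_constant card_lessThan)
    finally show ?thesis .
  qed
  then have fibre: "emeasure Omega {\<omega>. fun_upd \<omega> (Vert n s u) y \<in> subtree_above (Suc h) n s u a} =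
                    (if a \<le> 0 then ennreal (p ^ fst y) else 0)" for y
    by (simp add: children emeasure_Omega_eq_measure)
  have "emeasure Omega (subtree_above (Suc h) n s u a) =
          (\<integral>\<^sup>+ y. emeasure Omega {\<omega>. fun_upd \<omega> (Vert n s u) y \<in> subtree_above (Suc h) n s u a} \<partial>coord)"
    by (rule emeasure_Omega_condition_component[OF sets_subtree_above])
  also have "\<dots> = (\<integral>\<^sup>+ y. (if a \<le> 0 then ennreal (p ^ fst y) else 0) \<partial>coord)"
    by (simp only: fibre)
  also have "\<dots> = (\<integral>\<^sup>+ c. (if a \<le> 0 then ennreal (p ^ c) else 0) \<partial>geometric_pmf (1/2))"
    by (rule nn_integral_coord_fst)
  also have "\<dots> = (if a \<le> 0 then ennreal (1 / (2 - p)) else 0)"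
    using nn_integral_geometric_power[OF p] by simp
  finally have "ennreal (measure Omega (subtree_above (Suc h) n s u a)) = ennreal (labels_ge_prob_height (Suc h) a)"
    by (simp add: emeasure_Omega_eq_measure p_def)
  then show ?case
    using labels_ge_prob_height_bounds[of "Suc h" a] by (simp add: ennreal_inj)
qed

definition tree_above :: "nat \<Rightarrow> bool \<Rightarrow> int \<Rightarrow> (idx \<Rightarrow> nat \<times> int) set" where
  "tree_above n s b = {\<omega>. \<forall>v. in_subtree \<omega> n s [] v \<longrightarrow> b \<le> rel_label \<omega> n s [] v}"

lemma tree_above_eq_INT: "tree_above n s b = (\<Inter>h. subtree_above h n s [] b)"
  unfolding tree_above_def subtree_above_def by auto

lemma sets_tree_above: "tree_above n s b \<in> sets Omega"
  unfolding tree_above_eq_INT using sets_subtree_above by (intro sets.countable_INT) auto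

lemma depends_on_tree_above: "depends_on (tree_above n s b) (subtree_coords n s [])"
  unfolding tree_above_eq_INT by (intro depends_on_INT depends_on_subtree_above)

lemma measure_tree_above: "measure Omega (tree_above n s b) = labels_ge_prob b"
proof -
  have "decseq (\<lambda>h. subtree_above h n s [] b)"
    unfolding decseq_def subtree_above_def by auto
  then have "(\<lambda>h. measure Omega (subtree_above h n s [] b)) \<longlonglongrightarrow> measure Omega (tree_above n s b)"
    unfolding tree_above_eq_INT by (intro P.finite_Lim_measure_decseq) (auto intro: sets_subtree_above)
  then show ?thesis
    using LIMSEQ_unique labels_ge_prob_height_tendsto by (simp add: measure_subtree_above) blast
qed

lemma theta_in_tree_above_iff: "theta \<omega> \<in> tree_above n s b \<longleftrightarrow> \<omega> \<in> tree_above (Suc n) s b"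
  unfolding tree_above_def in_subtree_def rel_label_def theta_def by simp

section \<open>The forest along the spine\<close>

definition forest_above :: "nat \<Rightarrow> nat \<Rightarrow> int \<Rightarrow> (idx \<Rightarrow> nat \<times> int) set" where
  "forest_above m N x =
     {\<omega>. \<forall>n<N. (\<forall>j\<le>n. x + X \<omega> j \<noteq> -1) \<longrightarrow> \<omega> \<in> tree_above n True (1 - int m - x - X \<omega> n)}"

lemma forest_above_0 [simp]: "forest_above m 0 x = UNIV"
  by (simp add: forest_above_def)

lemma forest_above_minus_1 [simp]: "forest_above m N (-1) = UNIV"
  by (auto simp: forest_above_def)

lemma forest_above_Suc:
  assumes "x \<noteq> -1"
  shows "forest_above m (Suc N) x =
           tree_above 0 True (1 - int m - x) \<inter> {\<omega>. theta \<omega> \<in> forest_above m N (x + snd (\<omega> (Spine 0)))}"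
proof -
  have walk: "(\<forall>j\<le>Suc n. x + X \<omega> j \<noteq> -1) \<longleftrightarrow> (\<forall>j\<le>n. (x + snd (\<omega> (Spine 0))) + X (theta \<omega>) j \<noteq> -1)"
    for \<omega> n
    using assms by (simp only: less_Suc_eq_le[symmetric] All_less_Suc2) (simp add: X_Suc add.assoc)
  have tree: "\<omega> \<in> tree_above (Suc n) True (1 - int m - x - X \<omega> (Suc n)) \<longleftrightarrow>
              theta \<omega> \<in> tree_above n True (1 - int m - (x + snd (\<omega> (Spine 0))) - X (theta \<omega>) n)" for \<omega> n
    by (simp add: theta_in_tree_above_iff X_Suc algebra_simps)
  show ?thesis
    unfolding forest_above_def using assms by (auto simp: All_less_Suc2 walk tree)
qed

lemma sets_forest_above: "forest_above m N x \<in> sets Omega"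
proof -
  have "forest_above m N x =
          {\<omega>. \<forall>nv. case nv of (n, v) \<Rightarrow> n < N \<longrightarrow> (\<forall>j\<le>n. x + X \<omega> j \<noteq> -1) \<longrightarrow> in_subtree \<omega> n True [] v
                 \<longrightarrow> 1 - int m - x - X \<omega> n \<le> rel_label \<omega> n True [] v}"
    unfolding forest_above_def tree_above_def by auto
  also have "\<dots> \<in> sets Omega"
  proof (rule sets_Collect_all_finite_dependence[where J = "\<lambda>(n, v). Spine ` {..<n} \<union> path_coords n True [] v"])
    fix nv :: "nat \<times> nat list" and \<omega> \<omega>' :: "idx \<Rightarrow> nat \<times> int"
    obtain n v where nv: "nv = (n, v)" by fastforce
    assume "\<forall>i\<in>(case nv of (n, v) \<Rightarrow> Spine ` {..<n} \<union> path_coords n True [] v). \<omega> i = \<omega>' i"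
    then have spine: "\<forall>i<n. \<omega> (Spine i) = \<omega>' (Spine i)" and path: "\<forall>i\<in>path_coords n True [] v. \<omega> i = \<omega>' i"
      by (auto simp: nv)
    have "X \<omega> j = X \<omega>' j" if "j \<le> n" for j
      unfolding X_def using spine that by (intro sum.cong) auto
    then show "(case nv of (n, v) \<Rightarrow> n < N \<longrightarrow> (\<forall>j\<le>n. x + X \<omega> j \<noteq> -1) \<longrightarrow> in_subtree \<omega> n True [] v
                 \<longrightarrow> 1 - int m - x - X \<omega> n \<le> rel_label \<omega> n True [] v) =
               (case nv of (n, v) \<Rightarrow> n < N \<longrightarrow> (\<forall>j\<le>n. x + X \<omega>' j \<noteq> -1) \<longrightarrow> in_subtree \<omega>' n True [] v
                 \<longrightarrow> 1 - int m - x - X \<omega>' n \<le> rel_label \<omega>' n True [] v)"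
      by (simp add: nv in_subtree_cong[OF path] rel_label_cong[OF path])
  qed (auto split: prod.splits)
  finally show ?thesis .
qed

text \<open>
  Conditioning on the first spine step: the tree grafted at the root and the shifted process are
  independent, and the shifted process has the law of the original one.
\<close>

lemma measure_forest_above: "measure Omega (forest_above m N x) = forest_above_prob m N x"
proof (induction N arbitrary: x)
  case (Suc N)
  show ?case
  proof (cases "x = -1")
    case False
    let ?T = "tree_above 0 True (1 - int m - x)"
    define W where "W = labels_ge_prob (1 - int m - x)"
    have disjoint: "subtree_coords 0 True [] \<inter> range spine_shift = {}"
      unfolding subtree_coords_def by (auto elim: spine_shift.elims)
    have "Spine 0 \<notin> subtree_coords 0 True []" by (auto simp: subtree_coords_def)
    then have fibre: "{\<omega>. fun_upd \<omega> (Spine 0) y \<in> forest_above m (Suc N) x} = ?T \<inter> theta -` forest_above m N (x + snd y)"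
      for y
      using depends_on_fun_upd[OF depends_on_tree_above] by (auto simp: forest_above_Suc[OF False])
    have "measure Omega (?T \<inter> theta -` forest_above m N (x + d)) = W * forest_above_prob m N (x + d)" for d
      using measure_Int_depends_on_disjoint[OF sets_tree_above sets_vimage_theta[OF sets_forest_above]
              depends_on_tree_above depends_on_vimage_theta disjoint]
      by (simp add: measure_tree_above measure_vimage_theta[OF sets_forest_above] Suc.IH W_def)
    then have fibre_measure: "emeasure Omega {\<omega>. fun_upd \<omega> (Spine 0) y \<in> forest_above m (Suc N) x} =
                                ennreal (W * forest_above_prob m N (x + snd y))" for y
      by (simp add: fibre emeasure_Omega_eq_measure)
    have "emeasure Omega (forest_above m (Suc N) x) =
            (\<integral>\<^sup>+ y. emeasure Omega {\<omega>. fun_upd \<omega> (Spine 0) y \<in> forest_above m (Suc N) x} \<partial>coord)"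
      by (rule emeasure_Omega_condition_component[OF sets_forest_above])
    also have "\<dots> = (\<integral>\<^sup>+ y. ennreal (W * forest_above_prob m N (x + snd y)) \<partial>coord)"
      by (simp only: fibre_measure)
    also have "\<dots> = (\<Sum>d\<in>{-1, 0, 1}. ennreal (W * forest_above_prob m N (x + d))) / 3"
      by (simp add: nn_integral_coord measure_pmf.emeasure_space_1)
    also have "\<dots> = ennreal ((W * forest_above_prob m N (x - 1) + W * forest_above_prob m N x
                              + W * forest_above_prob m N (x + 1)) / 3)"
      using labels_ge_prob_bounds[of "1 - int m - x"] forest_above_prob_nonneg[of m N]
      by (subst sum_three_ennreal_avg) (simp_all add: W_def add_ac)
    also have "\<dots> = ennreal (forest_above_prob m (Suc N) x)"
      using False by (simp add: W_def algebra_simps)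
    finally have "ennreal (measure Omega (forest_above m (Suc N) x)) = ennreal (forest_above_prob m (Suc N) x)"
      by (simp only: emeasure_Omega_eq_measure)
    then show ?thesis
      using forest_above_prob_nonneg[of m "Suc N" x] by (simp only: ennreal_inj measure_nonneg)
  qed simp
qed simp

section \<open>The event \<open>\<Delta>'\<^sub>0 \<ge> m\<close>\<close>

lemma sigma_0 [simp]: "sigma \<omega> 0 = 0"
proof -
  have "\<exists>n. X \<omega> n = - int 0" by (rule exI[of _ 0]) simp
  then show ?thesis by (simp add: sigma_def zero_enat_def)
qed

lemma less_sigma_1_iff: "enat n < sigma \<omega> (Suc 0) \<longleftrightarrow> (\<forall>j\<le>n. X \<omega> j \<noteq> -1)"
proof (cases "\<exists>k. X \<omega> k = -1")
  case True
  define L where "L = (LEAST k. X \<omega> k = -1)"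
  have "sigma \<omega> (Suc 0) = enat L" using True by (simp add: sigma_def L_def)
  moreover have "X \<omega> L = -1" unfolding L_def using True by (rule LeastI_ex)
  moreover have "j < L \<Longrightarrow> X \<omega> j \<noteq> -1" for j unfolding L_def by (rule not_less_Least)
  ultimately show ?thesis by (metis enat_ord_simps(2) le_less_trans not_le)
next
  case False
  then show ?thesis by (auto simp: sigma_def)
qed

lemma ereal_le_SUP_int_iff:
  fixes f :: "'a \<Rightarrow> int"
  shows "ereal (real m) \<le> (SUP v\<in>S. ereal (real_of_int (f v))) \<longleftrightarrow> (\<exists>v\<in>S. int m \<le> f v)"
proof
  assume le: "ereal (real m) \<le> (SUP v\<in>S. ereal (real_of_int (f v)))"
  show "\<exists>v\<in>S. int m \<le> f v"
  proof (rule ccontr)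
    assume "\<not> (\<exists>v\<in>S. int m \<le> f v)"
    then have "(SUP v\<in>S. ereal (real_of_int (f v))) \<le> ereal (real m - 1)"
      by (intro SUP_least) auto
    from order_trans[OF le this] show False by simp
  qed
next
  assume "\<exists>v\<in>S. int m \<le> f v"
  then show "ereal (real m) \<le> (SUP v\<in>S. ereal (real_of_int (f v)))"
    by (auto intro: SUP_upper2)
qed

lemma Lforest_0_eq: "Lforest \<omega> 0 = {(n, v). (\<forall>j\<le>n. X \<omega> j \<noteq> -1) \<and> in_subtree \<omega> n True [] v}"
  unfolding Lforest_def by (simp add: less_sigma_1_iff gtree_eq_in_subtree)

lemma Delta'_0_ge_iff:
  "ereal (real m) \<le> Delta' \<omega> 0 \<longleftrightarrow>
     (\<exists>n v. (\<forall>j\<le>n. X \<omega> j \<noteq> -1) \<and> in_subtree \<omega> n True [] v \<and> int m \<le> - (X \<omega> n + rel_label \<omega> n True [] v))"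
proof -
  have "Delta' \<omega> 0 = (SUP v\<in>Lforest \<omega> 0. ereal (real_of_int (- glabel \<omega> (fst v) True (snd v))))"
    by (simp add: Delta'_def)
  then have "ereal (real m) \<le> Delta' \<omega> 0 \<longleftrightarrow> (\<exists>v\<in>Lforest \<omega> 0. int m \<le> - glabel \<omega> (fst v) True (snd v))"
    by (simp only: ereal_le_SUP_int_iff)
  then show ?thesis by (auto simp: Lforest_0_eq glabel_eq_rel_label)
qed

lemma Delta'_0_ge_eq:
  "{\<omega> \<in> space Omega. ereal (real m) \<le> Delta' \<omega> 0} = UNIV - (\<Inter>N. forest_above m N 0)"
proof -
  have "\<omega> \<notin> (\<Inter>N. forest_above m N 0) \<longleftrightarrow> ereal (real m) \<le> Delta' \<omega> 0" for \<omega>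
  proof
    assume "\<omega> \<notin> (\<Inter>N. forest_above m N 0)"
    then obtain n where walk: "\<forall>j\<le>n. X \<omega> j \<noteq> -1" and "\<omega> \<notin> tree_above n True (1 - int m - X \<omega> n)"
      unfolding forest_above_def by auto
    then obtain v where "in_subtree \<omega> n True [] v" "\<not> 1 - int m - X \<omega> n \<le> rel_label \<omega> n True [] v"
      unfolding tree_above_def by auto
    with walk show "ereal (real m) \<le> Delta' \<omega> 0"
      unfolding Delta'_0_ge_iff by (intro exI[of _ n] exI[of _ v]) auto
  next
    assume "ereal (real m) \<le> Delta' \<omega> 0"
    then obtain n v where walk: "\<forall>j\<le>n. X \<omega> j \<noteq> -1" and v: "in_subtree \<omega> n True [] v"
      and deep: "int m \<le> - (X \<omega> n + rel_label \<omega> n True [] v)"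
      unfolding Delta'_0_ge_iff by blast
    from deep have "\<not> 1 - int m - X \<omega> n \<le> rel_label \<omega> n True [] v" by simp
    with v have "\<omega> \<notin> tree_above n True (1 - int m - X \<omega> n)"
      unfolding tree_above_def by blast
    with walk have "\<omega> \<notin> forest_above m (Suc n) 0"
      unfolding forest_above_def by simp blast
    then show "\<omega> \<notin> (\<Inter>N. forest_above m N 0)" by blast
  qed
  then show ?thesis by auto
qed

lemma prob_Delta'_0_ge:
  assumes "m \<ge> 1"
  shows "measure Omega {\<omega> \<in> space Omega. ereal (real m) \<le> Delta' \<omega> 0} = 2 / (real m + 2)"
proof -
  have "decseq (\<lambda>N. forest_above m N 0)"
    unfolding decseq_def forest_above_def by auto
  then have "(\<lambda>N. measure Omega (forest_above m N 0)) \<longlonglongrightarrow> measure Omega (\<Inter>N. forest_above m N 0)"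
    by (intro P.finite_Lim_measure_decseq) (auto intro: sets_forest_above)
  then have "(\<lambda>N. forest_above_prob m N 0) \<longlonglongrightarrow> measure Omega (\<Inter>N. forest_above m N 0)"
    by (simp add: measure_forest_above)
  then have "measure Omega (\<Inter>N. forest_above m N 0) = real m / (real m + 2)"
    using LIMSEQ_unique forest_above_prob_tendsto[OF assms] by blast
  moreover have "(\<Inter>N. forest_above m N 0) \<in> sets Omega"
    using sets_forest_above by (intro sets.countable_INT) auto
  ultimately have "measure Omega (UNIV - (\<Inter>N. forest_above m N 0)) = 1 - real m / (real m + 2)"
    using P.prob_compl by simp
  also have "\<dots> = 2 / (real m + 2)" by (simp add: field_simps)
  finally show ?thesis unfolding Delta'_0_ge_eq .
qed

theorem lemma7:
  shows "(\<lambda>m::nat. measure Omega {\<omega> \<in> space Omega. Delta' \<omega> 0 \<ge> ereal (real m)} / (2 / real m))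
           \<longlonglongrightarrow> 1"
proof -
  have "\<forall>\<^sub>F m in sequentially.
          real m / (real m + 2) = measure Omega {\<omega> \<in> space Omega. Delta' \<omega> 0 \<ge> ereal (real m)} / (2 / real m)"
    using prob_Delta'_0_ge by (intro eventually_sequentiallyI[of 1]) (simp add: field_simps)
  moreover have "(\<lambda>m::nat. real m / (real m + 2)) \<longlonglongrightarrow> 1" by real_asymp
  ultimately show ?thesis by (rule Lim_transform_eventually[rotated])
qed

end
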